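(* Every surjective closed map and every surjective open map in $\mathbf{CLS}$ is an effective descent morphism in $\mathbf{CLS}$.
   Context: A closure space is a pair $(A,\mathcal{C}_A)$ where $A$ is a set and $\mathcal{C}_A$ is a set of subsets of $A$ closed under arbitrary intersections (so $A\in\mathcal{C}_A$); elements of $\mathcal{C}_A$ are called closed. $\mathbf{CLS}$ has closure spaces as objects and, as morphisms $\alpha:A\to B$, maps with $\alpha^{-1}(B')\in\mathcal{C}_A$ for all $B'\in\mathcal{C}_B$. A morphism $p:E\to B$ is closed if $p(Y)\in\mathcal{C}_B$ for all $Y\in\mathcal{C}_E$, and open if $B\setminus p(Y)\in\mathcal{C}_B$ whenever $E\setminus Y\in\mathcal{C}_E$. For a morphism $p:E\to B$ in a category with pullbacks, a descent data for $p$ is a triple $(C,\gamma,\xi)$ with $\gamma:C\to E$, $\xi:E\times_BC\to C$ (pullback of $p$ and $p\gamma$, projections $\pi_1,\pi_2$) such that $\gamma\xi=\pi_1$, $\xi\langle\gamma,1_C\rangle=1_C$, $\xi\circ(E\times_B\xi)=\xi\circ(E\times_B\pi_2)$; morphisms are maps $f:C\to C'$ with $\gamma'f=\gamma$, $f\xi=\xi'(E\times_Bf)$. The comparison functor $K^p:(\mathbf{C}\downarrow B)\to\mathrm{Des}(p)$ is $K^p(A,\alpha)=(E\times_BA,\pi_1,E\times_B\pi_2)$, and $p$ is an effective descent morphism if $K^p$ is an equivalence of categories. *)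

theory Defs
  imports Main
begin

type_synonym 'a cls = "'a set \<times> 'a set set"

abbreviation carrier :: "'a cls \<Rightarrow> 'a set" where "carrier X \<equiv> fst X"
abbreviation closed :: "'a cls \<Rightarrow> 'a set set" where "closed X \<equiv> snd X"

text \<open>Closed under arbitrary intersections; the empty intersection is the carrier.\<close>
definition closure_space :: "'a cls \<Rightarrow> bool" where
  "closure_space X \<longleftrightarrow> closed X \<subseteq> Pow (carrier X) \<and>
     (\<forall>S. S \<subseteq> closed X \<longrightarrow> carrier X \<inter> \<Inter>S \<in> closed X)"

definition cls_mor :: "'a cls \<Rightarrow> 'b cls \<Rightarrow> ('a \<Rightarrow> 'b) \<Rightarrow> bool" where
  "cls_mor X Y f \<longleftrightarrow> (\<forall>x\<in>carrier X. f x \<in> carrier Y) \<and>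
     (\<forall>Z\<in>closed Y. {x\<in>carrier X. f x \<in> Z} \<in> closed X)"

definition closed_mor :: "'a cls \<Rightarrow> 'b cls \<Rightarrow> ('a \<Rightarrow> 'b) \<Rightarrow> bool" where
  "closed_mor E B p \<longleftrightarrow> cls_mor E B p \<and> (\<forall>Y\<in>closed E. p ` Y \<in> closed B)"

definition open_mor :: "'a cls \<Rightarrow> 'b cls \<Rightarrow> ('a \<Rightarrow> 'b) \<Rightarrow> bool" where
  "open_mor E B p \<longleftrightarrow> cls_mor E B p \<and>
     (\<forall>Y. Y \<subseteq> carrier E \<longrightarrow> carrier E - Y \<in> closed E \<longrightarrow> carrier B - p ` Y \<in> closed B)"

text \<open>The (standard) pullback of p : E \<rightarrow> B and q : C \<rightarrow> B in CLS: the fibre product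
  with the initial closure structure w.r.t. the two projections.\<close>
definition pb_carrier :: "('e \<Rightarrow> 'b) \<Rightarrow> 'e cls \<Rightarrow> ('c \<Rightarrow> 'b) \<Rightarrow> 'c cls \<Rightarrow> ('e \<times> 'c) set" where
  "pb_carrier p E q C = {(e, c). e \<in> carrier E \<and> c \<in> carrier C \<and> p e = q c}"

definition pb :: "('e \<Rightarrow> 'b) \<Rightarrow> 'e cls \<Rightarrow> ('c \<Rightarrow> 'b) \<Rightarrow> 'c cls \<Rightarrow> ('e \<times> 'c) cls" where
  "pb p E q C = (let P = pb_carrier p E q C in
     (P, {P \<inter> \<Inter>S | S. S \<subseteq> {{x\<in>P. fst x \<in> Y} | Y. Y \<in> closed E}
                          \<union> {{x\<in>P. snd x \<in> Z} | Z. Z \<in> closed C}}))"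

definition descent_data ::
  "('e \<Rightarrow> 'b) \<Rightarrow> 'e cls \<Rightarrow> 'c cls \<Rightarrow> ('c \<Rightarrow> 'e) \<Rightarrow> ('e \<times> 'c \<Rightarrow> 'c) \<Rightarrow> bool" where
  "descent_data p E C \<gamma> \<xi> \<longleftrightarrow>
     closure_space C \<and> cls_mor C E \<gamma> \<and> cls_mor (pb p E (p \<circ> \<gamma>) C) C \<xi> \<and>
     (\<forall>x\<in>pb_carrier p E (p \<circ> \<gamma>) C. \<gamma> (\<xi> x) = fst x) \<and>
     (\<forall>c\<in>carrier C. \<xi> (\<gamma> c, c) = c) \<and>
     (\<forall>e e' c. (e, (e', c)) \<in> pb_carrier p E (\<lambda>y. p (fst y)) (pb p E (p \<circ> \<gamma>) C) \<longrightarrow>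
         \<xi> (e, \<xi> (e', c)) = \<xi> (e, c))"

definition descent_mor ::
  "('e \<Rightarrow> 'b) \<Rightarrow> 'e cls \<Rightarrow> 'c cls \<Rightarrow> ('c \<Rightarrow> 'e) \<Rightarrow> ('e \<times> 'c \<Rightarrow> 'c)
     \<Rightarrow> 'd cls \<Rightarrow> ('d \<Rightarrow> 'e) \<Rightarrow> ('e \<times> 'd \<Rightarrow> 'd) \<Rightarrow> ('c \<Rightarrow> 'd) \<Rightarrow> bool" where
  "descent_mor p E C \<gamma> \<xi> C' \<gamma>' \<xi>' f \<longleftrightarrow>
     cls_mor C C' f \<and> (\<forall>c\<in>carrier C. \<gamma>' (f c) = \<gamma> c) \<and>
     (\<forall>e c. (e, c) \<in> pb_carrier p E (p \<circ> \<gamma>) C \<longrightarrow> f (\<xi> (e, c)) = \<xi>' (e, f c))"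

definition slice_obj :: "'b cls \<Rightarrow> 'a cls \<Rightarrow> ('a \<Rightarrow> 'b) \<Rightarrow> bool" where
  "slice_obj B A \<alpha> \<longleftrightarrow> closure_space A \<and> cls_mor A B \<alpha>"

definition slice_mor :: "'a cls \<Rightarrow> ('a \<Rightarrow> 'b) \<Rightarrow> 'a' cls \<Rightarrow> ('a' \<Rightarrow> 'b) \<Rightarrow> ('a \<Rightarrow> 'a') \<Rightarrow> bool" where
  "slice_mor A \<alpha> A' \<alpha>' g \<longleftrightarrow> cls_mor A A' g \<and> (\<forall>a\<in>carrier A. \<alpha>' (g a) = \<alpha> a)"

text \<open>The comparison functor K^p.
  On objects: K^p(A,\<alpha>) = (E \<times>_B A, \<pi>1, E \<times>_B \<pi>2); on morphisms: g \<mapsto> E \<times>_B g.\<close>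
definition K_cls :: "('e \<Rightarrow> 'b) \<Rightarrow> 'e cls \<Rightarrow> 'a cls \<Rightarrow> ('a \<Rightarrow> 'b) \<Rightarrow> ('e \<times> 'a) cls" where
  "K_cls p E A \<alpha> = pb p E \<alpha> A"

definition K_gamma :: "'e \<times> 'a \<Rightarrow> 'e" where
  "K_gamma = fst"

definition K_xi :: "'e \<times> ('e \<times> 'a) \<Rightarrow> 'e \<times> 'a" where
  "K_xi x = (fst x, snd (snd x))"

definition K_mor :: "('a \<Rightarrow> 'a') \<Rightarrow> 'e \<times> 'a \<Rightarrow> 'e \<times> 'a'" where
  "K_mor g x = (fst x, g (snd x))"

definition K_full_faithful_at ::
  "('e \<Rightarrow> 'b) \<Rightarrow> 'e cls \<Rightarrow> 'b cls \<Rightarrow> 'a cls \<Rightarrow> ('a \<Rightarrow> 'b) \<Rightarrow> 'a' cls \<Rightarrow> ('a' \<Rightarrow> 'b) \<Rightarrow> bool" where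
  "K_full_faithful_at p E B A \<alpha> A' \<alpha>' \<longleftrightarrow>
     (\<forall>g1 g2. slice_mor A \<alpha> A' \<alpha>' g1 \<longrightarrow> slice_mor A \<alpha> A' \<alpha>' g2 \<longrightarrow>
        (\<forall>x\<in>carrier (K_cls p E A \<alpha>). K_mor g1 x = K_mor g2 x) \<longrightarrow>
        (\<forall>a\<in>carrier A. g1 a = g2 a)) \<and>
     (\<forall>f. descent_mor p E (K_cls p E A \<alpha>) K_gamma K_xi (K_cls p E A' \<alpha>') K_gamma K_xi f \<longrightarrow>
        (\<exists>g. slice_mor A \<alpha> A' \<alpha>' g \<and> (\<forall>x\<in>carrier (K_cls p E A \<alpha>). K_mor g x = f x)))"

text \<open>The descent data (C,\<gamma>,\<xi>) is isomorphic in Des(p) to K^p(A,\<alpha>) for some object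
  (A,\<alpha>) of CLS \<down> B (with A taken on the same carrier type as C).\<close>
definition K_ess_surj_at ::
  "('e \<Rightarrow> 'b) \<Rightarrow> 'e cls \<Rightarrow> 'b cls \<Rightarrow> 'c cls \<Rightarrow> ('c \<Rightarrow> 'e) \<Rightarrow> ('e \<times> 'c \<Rightarrow> 'c) \<Rightarrow> bool" where
  "K_ess_surj_at p E B C \<gamma> \<xi> \<longleftrightarrow>
     (\<exists>(A :: 'c cls) \<alpha> f h. slice_obj B A \<alpha> \<and>
        descent_mor p E (K_cls p E A \<alpha>) K_gamma K_xi C \<gamma> \<xi> f \<and>
        descent_mor p E C \<gamma> \<xi> (K_cls p E A \<alpha>) K_gamma K_xi h \<and>
        (\<forall>x\<in>carrier (K_cls p E A \<alpha>). h (f x) = x) \<and>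
        (\<forall>c\<in>carrier C. f (h c) = c))"

end

theory Submission
  imports Defs
begin

text \<open>
  Since p is surjective, a subset U of A whose preimage in E \<times>_B A is closed is itself closed:
  that preimage is a closed rectangle, U is its image if p is closed and the set of points whose
  whole fibre lies in it if p is open, and both are closed because p maps closed sets,
  respectively complements of closed sets, to sets of the same kind. This makes E \<times>_B - full
  and faithful. For essential surjectivity, \<xi> moves every point of a descent datum (C, \<gamma>, \<xi>)
  into the fibre over a chosen base point; the points so obtained, with the final closure
  structure, form an object of CLS \<down> B. The same image argument shows that every closed set
  of C is cut out by a closed set of E and a \<xi>-invariant closed set of C, so \<xi> is a
  homeomorphism from the pullback of that object onto C.
\<close>

lemma closure_space_carrier: "closure_space X \<Longrightarrow> carrier X \<in> closed X"
  unfolding closure_space_def by (metis Inf_empty Int_UNIV_right empty_subsetI)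

lemma closure_space_closed_subset: "closure_space X \<Longrightarrow> Z \<in> closed X \<Longrightarrow> Z \<subseteq> carrier X"
  unfolding closure_space_def by blast

lemma closure_space_Inter: "closure_space X \<Longrightarrow> S \<subseteq> closed X \<Longrightarrow> carrier X \<inter> \<Inter>S \<in> closed X"
  unfolding closure_space_def by blast

lemma closure_space_Int:
  assumes "closure_space X" "Z1 \<in> closed X" "Z2 \<in> closed X"
  shows "Z1 \<inter> Z2 \<in> closed X"
proof -
  have "carrier X \<inter> \<Inter>{Z1, Z2} \<in> closed X"
    using assms by (intro closure_space_Inter) auto
  moreover have "carrier X \<inter> \<Inter>{Z1, Z2} = Z1 \<inter> Z2"
    using closure_space_closed_subset[OF assms(1,2)] by auto
  ultimately show ?thesis by simp
qed

lemma cls_morI: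
  "(\<And>x. x \<in> carrier X \<Longrightarrow> f x \<in> carrier Y) \<Longrightarrow>
   (\<And>Z. Z \<in> closed Y \<Longrightarrow> {x\<in>carrier X. f x \<in> Z} \<in> closed X) \<Longrightarrow> cls_mor X Y f"
  unfolding cls_mor_def by blast

lemma cls_mor_mem: "cls_mor X Y f \<Longrightarrow> x \<in> carrier X \<Longrightarrow> f x \<in> carrier Y"
  unfolding cls_mor_def by blast

lemma cls_mor_vimage: "cls_mor X Y f \<Longrightarrow> Z \<in> closed Y \<Longrightarrow> {x\<in>carrier X. f x \<in> Z} \<in> closed X"
  unfolding cls_mor_def by blast

lemma cls_mor_comp:
  assumes f: "cls_mor X Y f" and g: "cls_mor Y Z g"
  shows "cls_mor X Z (g \<circ> f)"
proof (rule cls_morI)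
  fix W assume "W \<in> closed Z"
  then have "{x\<in>carrier X. f x \<in> {y\<in>carrier Y. g y \<in> W}} \<in> closed X"
    by (intro cls_mor_vimage[OF f] cls_mor_vimage[OF g])
  moreover have "{x\<in>carrier X. f x \<in> {y\<in>carrier Y. g y \<in> W}} = {x\<in>carrier X. (g \<circ> f) x \<in> W}"
    using cls_mor_mem[OF f] by auto
  ultimately show "{x\<in>carrier X. (g \<circ> f) x \<in> W} \<in> closed X" by simp
qed (simp add: cls_mor_mem[OF g] cls_mor_mem[OF f])

lemma carrier_pb [simp]: "carrier (pb p E q C) = pb_carrier p E q C"
  by (simp add: pb_def Let_def)

lemma mem_pb_carrier [simp]:
  "(e, c) \<in> pb_carrier p E q C \<longleftrightarrow> e \<in> carrier E \<and> c \<in> carrier C \<and> p e = q c"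
  by (simp add: pb_carrier_def)

lemma closed_pbI:
  assumes "Y \<in> closed E" "W \<in> closed C"
  shows "{x\<in>pb_carrier p E q C. fst x \<in> Y \<and> snd x \<in> W} \<in> closed (pb p E q C)"
  using assms unfolding pb_def Let_def
  by (auto intro!: exI[of _ "{{x\<in>pb_carrier p E q C. fst x \<in> Y},
                              {x\<in>pb_carrier p E q C. snd x \<in> W}}"])

lemma closed_pbE:
  assumes E: "closure_space E" and C: "closure_space C" and T: "T \<in> closed (pb p E q C)"
  obtains Y W where "Y \<in> closed E" "W \<in> closed C"
    "T = {x\<in>pb_carrier p E q C. fst x \<in> Y \<and> snd x \<in> W}"
proof -
  let ?P = "pb_carrier p E q C"
  obtain S
    where S: "S \<subseteq> {{x\<in>?P. fst x \<in> Y} | Y. Y \<in> closed E} \<union> {{x\<in>?P. snd x \<in> W} | W. W \<in> closed C}"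
    and T: "T = ?P \<inter> \<Inter>S"
    using T by (auto simp: pb_def Let_def)
  define Y where "Y = carrier E \<inter> \<Inter>{Y\<in>closed E. {x\<in>?P. fst x \<in> Y} \<in> S}"
  define W where "W = carrier C \<inter> \<Inter>{W\<in>closed C. {x\<in>?P. snd x \<in> W} \<in> S}"
  have "Y \<in> closed E" unfolding Y_def by (rule closure_space_Inter[OF E]) auto
  moreover have "W \<in> closed C" unfolding W_def by (rule closure_space_Inter[OF C]) auto
  moreover have "T = {x\<in>?P. fst x \<in> Y \<and> snd x \<in> W}"
    unfolding T Y_def W_def using S by (auto simp: pb_carrier_def)
  ultimately show ?thesis by (rule that)
qed

lemma cls_mor_into_pb:
  assumes X: "closure_space X" and E: "closure_space E" and C: "closure_space C"
    and u: "cls_mor X E u" and v: "cls_mor X C v" and comm: "\<And>x. x \<in> carrier X \<Longrightarrow> p (u x) = q (v x)"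
  shows "cls_mor X (pb p E q C) (\<lambda>x. (u x, v x))"
proof (rule cls_morI)
  fix T assume "T \<in> closed (pb p E q C)"
  then obtain Y W where Y: "Y \<in> closed E" and W: "W \<in> closed C"
    and T: "T = {x\<in>pb_carrier p E q C. fst x \<in> Y \<and> snd x \<in> W}"
    by (rule closed_pbE[OF E C])
  have "{x\<in>carrier X. u x \<in> Y} \<inter> {x\<in>carrier X. v x \<in> W} \<in> closed X"
    using closure_space_Int[OF X cls_mor_vimage[OF u Y] cls_mor_vimage[OF v W]] .
  moreover have "{x\<in>carrier X. u x \<in> Y} \<inter> {x\<in>carrier X. v x \<in> W} = {x\<in>carrier X. (u x, v x) \<in> T}"
    using cls_mor_mem[OF u] cls_mor_mem[OF v] comm unfolding T by auto
  ultimately show "{x\<in>carrier X. (u x, v x) \<in> T} \<in> closed X" by simp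
qed (simp add: cls_mor_mem[OF u] cls_mor_mem[OF v] comm)

lemma closed_mor_pb_image_closed:
  assumes E: "closure_space E" and A: "closure_space A" and \<alpha>: "cls_mor A B \<alpha>"
    and p: "closed_mor E B p" and T: "T \<in> closed (pb p E \<alpha> A)"
  shows "{a\<in>carrier A. \<exists>e. (e, a) \<in> T} \<in> closed A"
proof -
  obtain Y W where Y: "Y \<in> closed E" and W: "W \<in> closed A"
    and T: "T = {x\<in>pb_carrier p E \<alpha> A. fst x \<in> Y \<and> snd x \<in> W}"
    by (rule closed_pbE[OF E A T])
  have "p ` Y \<in> closed B" using p Y unfolding closed_mor_def by blast
  then have "W \<inter> {a\<in>carrier A. \<alpha> a \<in> p ` Y} \<in> closed A"
    by (intro closure_space_Int[OF A W] cls_mor_vimage[OF \<alpha>])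
  moreover have "W \<inter> {a\<in>carrier A. \<alpha> a \<in> p ` Y} = {a\<in>carrier A. \<exists>e. (e, a) \<in> T}"
    using closure_space_closed_subset[OF E Y] unfolding T by (force simp: image_iff)
  ultimately show ?thesis by simp
qed

lemma open_mor_pb_coimage_closed:
  assumes E: "closure_space E" and A: "closure_space A" and \<alpha>: "cls_mor A B \<alpha>"
    and p: "open_mor E B p" and fibres: "\<alpha> ` carrier A \<subseteq> p ` carrier E"
    and T: "T \<in> closed (pb p E \<alpha> A)"
  shows "{a\<in>carrier A. \<forall>e\<in>carrier E. p e = \<alpha> a \<longrightarrow> (e, a) \<in> T} \<in> closed A"
proof -
  obtain Y W where Y: "Y \<in> closed E" and W: "W \<in> closed A"
    and T: "T = {x\<in>pb_carrier p E \<alpha> A. fst x \<in> Y \<and> snd x \<in> W}"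
    by (rule closed_pbE[OF E A T])
  have "carrier E - (carrier E - Y) = Y"
    using closure_space_closed_subset[OF E Y] by blast
  then have "carrier B - p ` (carrier E - Y) \<in> closed B"
    using p Y unfolding open_mor_def by (metis Diff_subset)
  then have "W \<inter> {a\<in>carrier A. \<alpha> a \<in> carrier B - p ` (carrier E - Y)} \<in> closed A"
    by (intro closure_space_Int[OF A W] cls_mor_vimage[OF \<alpha>])
  moreover have "W \<inter> {a\<in>carrier A. \<alpha> a \<in> carrier B - p ` (carrier E - Y)}
      = {a\<in>carrier A. \<forall>e\<in>carrier E. p e = \<alpha> a \<longrightarrow> (e, a) \<in> T}"
  proof (intro set_eqI iffI)
    fix a assume "a \<in> W \<inter> {a\<in>carrier A. \<alpha> a \<in> carrier B - p ` (carrier E - Y)}"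
    then show "a \<in> {a\<in>carrier A. \<forall>e\<in>carrier E. p e = \<alpha> a \<longrightarrow> (e, a) \<in> T}"
      unfolding T by (force simp: image_iff)
  next
    fix a assume a: "a \<in> {a\<in>carrier A. \<forall>e\<in>carrier E. p e = \<alpha> a \<longrightarrow> (e, a) \<in> T}"
    then obtain e where "e \<in> carrier E" "p e = \<alpha> a"
      using fibres by (metis (no_types, lifting) image_eqI image_iff mem_Collect_eq subsetD)
    then have "a \<in> W" using a unfolding T by simp
    moreover have "\<alpha> a \<notin> p ` (carrier E - Y)" using a unfolding T by auto
    ultimately show "a \<in> W \<inter> {a\<in>carrier A. \<alpha> a \<in> carrier B - p ` (carrier E - Y)}"
      using a cls_mor_mem[OF \<alpha>] by simp
  qed
  ultimately show ?thesis by simp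
qed

lemma closed_of_pb_vimage_closed:
  assumes E: "closure_space E" and A: "closure_space A" and \<alpha>: "cls_mor A B \<alpha>"
    and p: "closed_mor E B p \<or> open_mor E B p" and fibres: "\<alpha> ` carrier A \<subseteq> p ` carrier E"
    and U: "U \<subseteq> carrier A"
    and T: "{x\<in>pb_carrier p E \<alpha> A. snd x \<in> U} \<in> closed (pb p E \<alpha> A)" (is "?T \<in> _")
  shows "U \<in> closed A"
proof -
  have fibre: "\<exists>e\<in>carrier E. p e = \<alpha> a" if "a \<in> carrier A" for a
    using fibres that by (metis image_eqI imageE subsetD)
  from p show ?thesis
  proof
    assume "closed_mor E B p"
    moreover have "{a\<in>carrier A. \<exists>e. (e, a) \<in> ?T} = U"
      using U fibre by auto
    ultimately show ?thesis using closed_mor_pb_image_closed[OF E A \<alpha> _ T] by simp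
  next
    assume "open_mor E B p"
    moreover have "{a\<in>carrier A. \<forall>e\<in>carrier E. p e = \<alpha> a \<longrightarrow> (e, a) \<in> ?T} = U"
      using U fibre by auto
    ultimately show ?thesis using open_mor_pb_coimage_closed[OF E A \<alpha> _ fibres T] by simp
  qed
qed

definition quotient_cls :: "'c cls \<Rightarrow> ('c \<Rightarrow> 'a) \<Rightarrow> 'a set \<Rightarrow> 'a cls" where
  "quotient_cls C q X = (X, {W. W \<subseteq> X \<and> {c\<in>carrier C. q c \<in> W} \<in> closed C})"

lemma carrier_quotient_cls [simp]: "carrier (quotient_cls C q X) = X"
  and closed_quotient_cls [simp]:
    "closed (quotient_cls C q X) = {W. W \<subseteq> X \<and> {c\<in>carrier C. q c \<in> W} \<in> closed C}"
  by (simp_all add: quotient_cls_def)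

lemma closure_space_quotient_cls:
  assumes C: "closure_space C" and q: "q ` carrier C \<subseteq> X"
  shows "closure_space (quotient_cls C q X)"
  unfolding closure_space_def
proof (intro conjI allI impI)
  fix S assume S: "S \<subseteq> closed (quotient_cls C q X)"
  have "carrier C \<inter> \<Inter>{{c\<in>carrier C. q c \<in> W} | W. W \<in> S} \<in> closed C"
    using S by (intro closure_space_Inter[OF C]) auto
  moreover have "carrier C \<inter> \<Inter>{{c\<in>carrier C. q c \<in> W} | W. W \<in> S} = {c\<in>carrier C. q c \<in> X \<inter> \<Inter>S}"
    using q by auto
  ultimately show "carrier (quotient_cls C q X) \<inter> \<Inter>S \<in> closed (quotient_cls C q X)"
    by simp
qed auto

lemma cls_mor_quotient_cls: "q ` carrier C \<subseteq> X \<Longrightarrow> cls_mor C (quotient_cls C q X) q"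
  by (rule cls_morI) auto

lemma cls_mor_from_quotient_cls:
  assumes X: "X = q ` carrier C" and g: "cls_mor C Y g" and fq: "\<And>c. c \<in> carrier C \<Longrightarrow> f (q c) = g c"
  shows "cls_mor (quotient_cls C q X) Y f"
proof (rule cls_morI)
  fix V assume "V \<in> closed Y"
  moreover have "{c\<in>carrier C. q c \<in> {x\<in>X. f x \<in> V}} = {c\<in>carrier C. g c \<in> V}"
    using X fq by (auto; metis)
  ultimately show "{x\<in>carrier (quotient_cls C q X). f x \<in> V} \<in> closed (quotient_cls C q X)"
    using cls_mor_vimage[OF g] by auto
qed (use X fq cls_mor_mem[OF g] in auto)

lemma descent_mor_K_cls_eq:
  assumes f: "descent_mor p E (K_cls p E A \<alpha>) K_gamma K_xi (K_cls p E A' \<alpha>') K_gamma K_xi f"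
    and "(e0, a) \<in> pb_carrier p E \<alpha> A" "(e, a) \<in> pb_carrier p E \<alpha> A"
  shows "f (e, a) = (e, snd (f (e0, a)))"
proof -
  have "(e, (e0, a)) \<in> pb_carrier p E (p \<circ> K_gamma) (K_cls p E A \<alpha>)"
    using assms(2,3) by (simp add: K_cls_def K_gamma_def)
  then have "f (K_xi (e, (e0, a))) = K_xi (e, f (e0, a))"
    using f unfolding descent_mor_def by blast
  then show ?thesis by (simp add: K_xi_def)
qed

lemma K_full_faithful_at_if_closed_or_open_surj:
  assumes E: "closure_space E" and surj: "p ` carrier E = carrier B"
    and p: "closed_mor E B p \<or> open_mor E B p"
    and A: "slice_obj B A \<alpha>"
  shows "K_full_faithful_at p E B A \<alpha> A' \<alpha>'"
proof -
  have A_cs: "closure_space A" and \<alpha>: "cls_mor A B \<alpha>"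
    using A unfolding slice_obj_def by auto
  have fibres: "\<alpha> ` carrier A \<subseteq> p ` carrier E" using cls_mor_mem[OF \<alpha>] surj by auto
  then have "\<forall>a\<in>carrier A. \<exists>e. (e, a) \<in> pb_carrier p E \<alpha> A" by force
  then obtain sel where sel: "\<And>a. a \<in> carrier A \<Longrightarrow> (sel a, a) \<in> pb_carrier p E \<alpha> A"
    by metis
  show ?thesis unfolding K_full_faithful_at_def
  proof (intro conjI allI impI ballI)
    fix g1 g2 a
    assume eq: "\<forall>x\<in>carrier (K_cls p E A \<alpha>). K_mor g1 x = K_mor g2 x" and a: "a \<in> carrier A"
    then have "K_mor g1 (sel a, a) = K_mor g2 (sel a, a)" using sel by (simp add: K_cls_def)
    then show "g1 a = g2 a" by (simp add: K_mor_def)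
  next
    fix f assume f: "descent_mor p E (K_cls p E A \<alpha>) K_gamma K_xi (K_cls p E A' \<alpha>') K_gamma K_xi f"
    define g where "g a = snd (f (sel a, a))" for a
    have f_mor: "cls_mor (pb p E \<alpha> A) (pb p E \<alpha>' A') f"
      using f unfolding descent_mor_def K_cls_def by simp
    have f_eq: "f x = K_mor g x" if "x \<in> pb_carrier p E \<alpha> A" for x
      using descent_mor_K_cls_eq[OF f sel, of "snd x" "fst x"] that
      by (cases x) (simp add: g_def K_mor_def)
    have g: "g a \<in> carrier A' \<and> \<alpha>' (g a) = \<alpha> a" if "a \<in> carrier A" for a
      using cls_mor_mem[OF f_mor, of "(sel a, a)"] f_eq[of "(sel a, a)"] sel[OF that]
      by (simp add: K_mor_def)
    have "cls_mor A A' g"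
    proof (rule cls_morI)
      fix Z assume "Z \<in> closed A'"
      let ?Z' = "{y\<in>pb_carrier p E \<alpha>' A'. fst y \<in> carrier E \<and> snd y \<in> Z}"
      have "?Z' \<in> closed (pb p E \<alpha>' A')"
        using \<open>Z \<in> closed A'\<close> by (intro closed_pbI closure_space_carrier[OF E])
      then have "{x\<in>carrier (pb p E \<alpha> A). f x \<in> ?Z'} \<in> closed (pb p E \<alpha> A)"
        by (rule cls_mor_vimage[OF f_mor])
      moreover have "{x\<in>carrier (pb p E \<alpha> A). f x \<in> ?Z'}
          = {x\<in>pb_carrier p E \<alpha> A. snd x \<in> {a\<in>carrier A. g a \<in> Z}}"
        using f_eq g by (auto simp: K_mor_def)
      ultimately show "{a\<in>carrier A. g a \<in> Z} \<in> closed A"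
        by (intro closed_of_pb_vimage_closed[OF E A_cs \<alpha> p fibres]) auto
    next
      fix a assume "a \<in> carrier A"
      then show "g a \<in> carrier A'" using g by blast
    qed
    then show "\<exists>g. slice_mor A \<alpha> A' \<alpha>' g \<and> (\<forall>x\<in>carrier (K_cls p E A \<alpha>). K_mor g x = f x)"
      using g f_eq by (auto simp: slice_mor_def K_cls_def)
  qed
qed

locale descent_datum =
  fixes p :: "'e \<Rightarrow> 'b" and E :: "'e cls" and C :: "'c cls"
    and \<gamma> :: "'c \<Rightarrow> 'e" and \<xi> :: "'e \<times> 'c \<Rightarrow> 'c"
  assumes descent_data: "descent_data p E C \<gamma> \<xi>"
begin

lemma closure_space_C: "closure_space C"
  and cls_mor_gamma: "cls_mor C E \<gamma>"
  and cls_mor_xi: "cls_mor (pb p E (p \<circ> \<gamma>) C) C \<xi>"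
  using descent_data unfolding descent_data_def by blast+

lemma gamma_mem: "c \<in> carrier C \<Longrightarrow> \<gamma> c \<in> carrier E"
  by (rule cls_mor_mem[OF cls_mor_gamma])

lemma xi_mem: "e \<in> carrier E \<Longrightarrow> c \<in> carrier C \<Longrightarrow> p e = p (\<gamma> c) \<Longrightarrow> \<xi> (e, c) \<in> carrier C"
  using cls_mor_mem[OF cls_mor_xi, of "(e, c)"] by simp

lemma gamma_xi: "e \<in> carrier E \<Longrightarrow> c \<in> carrier C \<Longrightarrow> p e = p (\<gamma> c) \<Longrightarrow> \<gamma> (\<xi> (e, c)) = e"
  using descent_data unfolding descent_data_def by fastforce

lemma xi_gamma: "c \<in> carrier C \<Longrightarrow> \<xi> (\<gamma> c, c) = c"
  using descent_data unfolding descent_data_def by blast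

lemma xi_xi:
  assumes "e \<in> carrier E" "e' \<in> carrier E" "c \<in> carrier C" "p e' = p (\<gamma> c)" "p e = p e'"
  shows "\<xi> (e, \<xi> (e', c)) = \<xi> (e, c)"
proof -
  have "(e, (e', c)) \<in> pb_carrier p E (\<lambda>y. p (fst y)) (pb p E (p \<circ> \<gamma>) C)"
    using assms by simp
  then show ?thesis using descent_data unfolding descent_data_def by blast
qed

definition xi_invariant :: "'c set \<Rightarrow> bool" where
  "xi_invariant S \<longleftrightarrow> (\<forall>e c. e \<in> carrier E \<longrightarrow> c \<in> carrier C \<longrightarrow> p e = p (\<gamma> c) \<longrightarrow>
     (\<xi> (e, c) \<in> S \<longleftrightarrow> c \<in> S))"

lemma xi_invariant_Ex: "xi_invariant {c\<in>carrier C. \<exists>e\<in>carrier E. p e = p (\<gamma> c) \<and> \<xi> (e, c) \<in> R}"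
  unfolding xi_invariant_def
proof (intro allI impI)
  fix e c assume ec: "e \<in> carrier E" "c \<in> carrier C" "p e = p (\<gamma> c)"
  have "\<xi> (e', \<xi> (e, c)) = \<xi> (e', c)" if "e' \<in> carrier E" "p e' = p e" for e'
    using xi_xi[OF that(1) ec that(2)] .
  then show "\<xi> (e, c) \<in> {c\<in>carrier C. \<exists>e\<in>carrier E. p e = p (\<gamma> c) \<and> \<xi> (e, c) \<in> R}
      \<longleftrightarrow> c \<in> {c\<in>carrier C. \<exists>e\<in>carrier E. p e = p (\<gamma> c) \<and> \<xi> (e, c) \<in> R}"
    using ec xi_mem[OF ec] gamma_xi[OF ec] by auto
qed

lemma xi_invariant_All: "xi_invariant {c\<in>carrier C. \<forall>e\<in>carrier E. p e = p (\<gamma> c) \<longrightarrow> \<xi> (e, c) \<in> R}"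
  unfolding xi_invariant_def
proof (intro allI impI)
  fix e c assume ec: "e \<in> carrier E" "c \<in> carrier C" "p e = p (\<gamma> c)"
  have "\<xi> (e', \<xi> (e, c)) = \<xi> (e', c)" if "e' \<in> carrier E" "p e' = p e" for e'
    using xi_xi[OF that(1) ec that(2)] .
  then show "\<xi> (e, c) \<in> {c\<in>carrier C. \<forall>e\<in>carrier E. p e = p (\<gamma> c) \<longrightarrow> \<xi> (e, c) \<in> R}
      \<longleftrightarrow> c \<in> {c\<in>carrier C. \<forall>e\<in>carrier E. p e = p (\<gamma> c) \<longrightarrow> \<xi> (e, c) \<in> R}"
    using ec xi_mem[OF ec] gamma_xi[OF ec] by auto
qed

lemma closed_xi_vimageE:
  assumes E: "closure_space E" and Z: "Z \<in> closed C"
  obtains Y W where "Y \<in> closed E" "W \<in> closed C"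
    "\<forall>e\<in>carrier E. \<forall>c\<in>carrier C. p e = p (\<gamma> c) \<longrightarrow> (\<xi> (e, c) \<in> Z \<longleftrightarrow> e \<in> Y \<and> c \<in> W)"
proof -
  have "{x\<in>carrier (pb p E (p \<circ> \<gamma>) C). \<xi> x \<in> Z} \<in> closed (pb p E (p \<circ> \<gamma>) C)"
    by (rule cls_mor_vimage[OF cls_mor_xi Z])
  then obtain Y W where Y: "Y \<in> closed E" and W: "W \<in> closed C"
    and T: "{x\<in>pb_carrier p E (p \<circ> \<gamma>) C. \<xi> x \<in> Z}
      = {x\<in>pb_carrier p E (p \<circ> \<gamma>) C. fst x \<in> Y \<and> snd x \<in> W}"
    by (auto elim: closed_pbE[OF E closure_space_C])
  have "\<xi> (e, c) \<in> Z \<longleftrightarrow> e \<in> Y \<and> c \<in> W"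
    if "e \<in> carrier E" "c \<in> carrier C" "p e = p (\<gamma> c)" for e c
  proof -
    have "(e, c) \<in> {x\<in>pb_carrier p E (p \<circ> \<gamma>) C. \<xi> x \<in> Z}
        \<longleftrightarrow> (e, c) \<in> {x\<in>pb_carrier p E (p \<circ> \<gamma>) C. fst x \<in> Y \<and> snd x \<in> W}"
      by (simp only: T)
    then show ?thesis using that by simp
  qed
  then show ?thesis using that[OF Y W] by blast
qed

lemma closed_decomposition:
  assumes E: "closure_space E" and p: "cls_mor E B p"
    and p_co: "closed_mor E B p \<or> open_mor E B p" and Z: "Z \<in> closed C"
  obtains Y S where "Y \<in> closed E" "S \<in> closed C" "xi_invariant S" "Z = {c\<in>S. \<gamma> c \<in> Y}"
proof -
  have p\<gamma>: "cls_mor C B (p \<circ> \<gamma>)" by (rule cls_mor_comp[OF cls_mor_gamma p])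
  have fibres: "(p \<circ> \<gamma>) ` carrier C \<subseteq> p ` carrier E" using gamma_mem by auto
  define T where "T R = {x\<in>carrier (pb p E (p \<circ> \<gamma>) C). \<xi> x \<in> R}" for R
  have T_closed: "T R \<in> closed (pb p E (p \<circ> \<gamma>) C)" if "R \<in> closed C" for R
    unfolding T_def by (rule cls_mor_vimage[OF cls_mor_xi that])
  obtain Y W where Y: "Y \<in> closed E" and W: "W \<in> closed C"
    and xi_Z: "\<forall>e\<in>carrier E. \<forall>c\<in>carrier C. p e = p (\<gamma> c) \<longrightarrow> (\<xi> (e, c) \<in> Z \<longleftrightarrow> e \<in> Y \<and> c \<in> W)"
    by (rule closed_xi_vimageE[OF E Z])
  have Z_sub: "Z \<subseteq> carrier C" by (rule closure_space_closed_subset[OF closure_space_C Z])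
  have Z_eq: "Z = {c\<in>S. \<gamma> c \<in> Y}" if "Z \<subseteq> S" "S \<subseteq> W" "S \<subseteq> carrier C" for S
  proof (intro set_eqI iffI)
    fix c assume c: "c \<in> Z"
    have "\<xi> (\<gamma> c, c) \<in> Z" using c Z_sub xi_gamma by auto
    then have "\<gamma> c \<in> Y" using xi_Z c Z_sub gamma_mem by blast
    then show "c \<in> {c\<in>S. \<gamma> c \<in> Y}" using c that by blast
  next
    fix c assume c: "c \<in> {c\<in>S. \<gamma> c \<in> Y}"
    then have "\<xi> (\<gamma> c, c) \<in> Z" using xi_Z that gamma_mem by blast
    then show "c \<in> Z" using c that xi_gamma by auto
  qed
  from p_co show thesis
  proof
    assume cl: "closed_mor E B p"
    let ?S = "{c\<in>carrier C. \<exists>e\<in>carrier E. p e = p (\<gamma> c) \<and> \<xi> (e, c) \<in> Z}"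
    have "{c\<in>carrier C. \<exists>e. (e, c) \<in> T Z} \<in> closed C"
      by (rule closed_mor_pb_image_closed[OF E closure_space_C p\<gamma> cl T_closed[OF Z]])
    moreover have "{c\<in>carrier C. \<exists>e. (e, c) \<in> T Z} = ?S"
      by (auto simp: T_def)
    ultimately have S: "?S \<in> closed C" by simp
    have "Z \<subseteq> ?S"
    proof
      fix c assume c: "c \<in> Z"
      then have "\<gamma> c \<in> carrier E \<and> \<xi> (\<gamma> c, c) \<in> Z" using Z_sub gamma_mem xi_gamma by auto
      then show "c \<in> ?S" using c Z_sub by blast
    qed
    moreover have "?S \<subseteq> W" using xi_Z by blast
    ultimately have "Z = {c\<in>?S. \<gamma> c \<in> Y}" by (rule Z_eq) auto
    then show thesis by (rule that[OF Y S xi_invariant_Ex])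
  next
    assume op: "open_mor E B p"
    let ?S = "{c\<in>carrier C. \<forall>e\<in>carrier E. p e = p (\<gamma> c) \<longrightarrow> \<xi> (e, c) \<in> W}"
    have "{c\<in>carrier C. \<forall>e\<in>carrier E. p e = (p \<circ> \<gamma>) c \<longrightarrow> (e, c) \<in> T W} \<in> closed C"
      by (rule open_mor_pb_coimage_closed[OF E closure_space_C p\<gamma> op fibres T_closed[OF W]])
    moreover have "{c\<in>carrier C. \<forall>e\<in>carrier E. p e = (p \<circ> \<gamma>) c \<longrightarrow> (e, c) \<in> T W} = ?S"
      by (auto simp: T_def)
    ultimately have S: "?S \<in> closed C" by simp
    have "Z \<subseteq> ?S"
    proof
      fix c assume c: "c \<in> Z"
      have "\<xi> (e, c) \<in> W" if e: "e \<in> carrier E" "p e = p (\<gamma> c)" for e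
      proof -
        have c': "\<xi> (e, c) \<in> carrier C" "p (\<gamma> c) = p (\<gamma> (\<xi> (e, c)))"
          using xi_mem[OF e(1) _ e(2)] gamma_xi[OF e(1) _ e(2)] c Z_sub e(2) by auto
        \<comment> \<open>by the cocycle condition, this point is \<open>\<xi> (\<gamma> c, c) = c\<close>\<close>
        have "\<xi> (\<gamma> c, \<xi> (e, c)) \<in> Z"
          using xi_xi[OF _ e(1) _ e(2)] xi_gamma gamma_mem c Z_sub e(2) by auto
        then show ?thesis using xi_Z gamma_mem c Z_sub c' by blast
      qed
      then show "c \<in> ?S" using c Z_sub by blast
    qed
    moreover have "?S \<subseteq> W"
      using xi_gamma gamma_mem by fastforce
    ultimately have "Z = {c\<in>?S. \<gamma> c \<in> Y}" by (rule Z_eq) auto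
    then show thesis by (rule that[OF Y S xi_invariant_All])
  qed
qed

definition base_point :: "'b \<Rightarrow> 'e" where
  "base_point b = (SOME e. e \<in> carrier E \<and> p e = b)"

definition canon :: "'c \<Rightarrow> 'c" where
  "canon c = \<xi> (base_point (p (\<gamma> c)), c)"

definition descended :: "'c cls" where
  "descended = quotient_cls C canon (canon ` carrier C)"

lemma base_point: "e \<in> carrier E \<Longrightarrow> base_point (p e) \<in> carrier E \<and> p (base_point (p e)) = p e"
  unfolding base_point_def by (rule someI[of _ e]) simp

lemma base_point_gamma:
  "c \<in> carrier C \<Longrightarrow> base_point (p (\<gamma> c)) \<in> carrier E \<and> p (base_point (p (\<gamma> c))) = p (\<gamma> c)"
  using base_point[OF gamma_mem] .

lemma canon_mem: "c \<in> carrier C \<Longrightarrow> canon c \<in> carrier C"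
  unfolding canon_def using xi_mem base_point_gamma by blast

lemma p_gamma_canon: "c \<in> carrier C \<Longrightarrow> p (\<gamma> (canon c)) = p (\<gamma> c)"
  unfolding canon_def using gamma_xi base_point_gamma by simp

lemma canon_xi:
  assumes "e \<in> carrier E" "c \<in> carrier C" "p e = p (\<gamma> c)"
  shows "canon (\<xi> (e, c)) = canon c"
proof -
  have "canon (\<xi> (e, c)) = \<xi> (base_point (p e), \<xi> (e, c))"
    unfolding canon_def using gamma_xi[OF assms] by simp
  also have "\<dots> = \<xi> (base_point (p e), c)"
    using xi_xi[OF _ assms] base_point[OF assms(1)] by simp
  finally show ?thesis unfolding canon_def using assms(3) by simp
qed

lemma xi_canon:
  assumes "e \<in> carrier E" "c \<in> carrier C" "p e = p (\<gamma> c)"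
  shows "\<xi> (e, canon c) = \<xi> (e, c)"
  unfolding canon_def using xi_xi[OF assms(1) _ assms(2)] base_point_gamma[OF assms(2)] assms(3)
  by simp

lemma canon_canon: "c \<in> carrier C \<Longrightarrow> canon (canon c) = canon c"
  using canon_xi[of "base_point (p (\<gamma> c))" c] base_point_gamma[of c]
  by (simp only: canon_def[of c, symmetric])

lemma canon_mem_iff: "xi_invariant S \<Longrightarrow> c \<in> carrier C \<Longrightarrow> canon c \<in> S \<longleftrightarrow> c \<in> S"
  unfolding xi_invariant_def canon_def using base_point_gamma by blast

lemma closure_space_descended: "closure_space descended"
  unfolding descended_def by (rule closure_space_quotient_cls[OF closure_space_C]) simp

lemma cls_mor_canon: "cls_mor C descended canon"
  unfolding descended_def by (rule cls_mor_quotient_cls) simp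

lemma slice_obj_descended:
  assumes p: "cls_mor E B p"
  shows "slice_obj B descended (p \<circ> \<gamma>)"
proof -
  have "cls_mor descended B (p \<circ> \<gamma>)"
    unfolding descended_def
    by (rule cls_mor_from_quotient_cls[OF refl cls_mor_comp[OF cls_mor_gamma p]])
      (simp add: p_gamma_canon)
  then show ?thesis by (simp add: slice_obj_def closure_space_descended)
qed

lemma mem_K_descended:
  "(e, a) \<in> carrier (K_cls p E descended (p \<circ> \<gamma>)) \<longleftrightarrow>
     e \<in> carrier E \<and> a \<in> canon ` carrier C \<and> p e = p (\<gamma> a)"
  by (simp add: K_cls_def descended_def)

lemma closed_descended_Int:
  assumes S: "S \<in> closed C" "xi_invariant S"
  shows "S \<inter> canon ` carrier C \<in> closed descended"
proof -
  have "{c\<in>carrier C. canon c \<in> S \<inter> canon ` carrier C} = S"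
    using canon_mem_iff[OF S(2)] closure_space_closed_subset[OF closure_space_C S(1)] by auto
  then show ?thesis using S(1) by (simp add: descended_def)
qed

lemma cls_mor_xi_descended:
  assumes E: "closure_space E" and p: "cls_mor E B p" and p_co: "closed_mor E B p \<or> open_mor E B p"
  shows "cls_mor (K_cls p E descended (p \<circ> \<gamma>)) C \<xi>"
proof (rule cls_morI)
  fix x assume "x \<in> carrier (K_cls p E descended (p \<circ> \<gamma>))"
  then show "\<xi> x \<in> carrier C"
    using xi_mem canon_mem by (cases x) (auto simp: mem_K_descended)
next
  fix Z assume "Z \<in> closed C"
  then obtain Y S where Y: "Y \<in> closed E" and S: "S \<in> closed C" "xi_invariant S"
    and Z: "Z = {c\<in>S. \<gamma> c \<in> Y}"
    by (rule closed_decomposition[OF E p p_co])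
  have "{x\<in>pb_carrier p E (p \<circ> \<gamma>) descended. fst x \<in> Y \<and> snd x \<in> S \<inter> canon ` carrier C}
      \<in> closed (pb p E (p \<circ> \<gamma>) descended)"
    by (rule closed_pbI[OF Y closed_descended_Int[OF S]])
  moreover have "\<xi> (e, a) \<in> Z \<longleftrightarrow> e \<in> Y \<and> a \<in> S"
    if "(e, a) \<in> carrier (K_cls p E descended (p \<circ> \<gamma>))" for e a
    using that S(2) gamma_xi canon_mem unfolding Z xi_invariant_def mem_K_descended by auto
  then have "{x\<in>carrier (K_cls p E descended (p \<circ> \<gamma>)). \<xi> x \<in> Z}
      = {x\<in>pb_carrier p E (p \<circ> \<gamma>) descended. fst x \<in> Y \<and> snd x \<in> S \<inter> canon ` carrier C}"
    by (auto simp: K_cls_def descended_def pb_carrier_def)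
  ultimately show "{x\<in>carrier (K_cls p E descended (p \<circ> \<gamma>)). \<xi> x \<in> Z}
      \<in> closed (K_cls p E descended (p \<circ> \<gamma>))"
    by (simp add: K_cls_def)
qed

lemma descent_mor_xi_descended:
  assumes "closure_space E" "cls_mor E B p" "closed_mor E B p \<or> open_mor E B p"
  shows "descent_mor p E (K_cls p E descended (p \<circ> \<gamma>)) K_gamma K_xi C \<gamma> \<xi> \<xi>"
  unfolding descent_mor_def
proof (intro conjI allI impI ballI)
  show "cls_mor (K_cls p E descended (p \<circ> \<gamma>)) C \<xi>"
    by (rule cls_mor_xi_descended[OF assms])
next
  fix x assume "x \<in> carrier (K_cls p E descended (p \<circ> \<gamma>))"
  then show "\<gamma> (\<xi> x) = K_gamma x"
    using gamma_xi canon_mem by (cases x) (auto simp: mem_K_descended K_gamma_def)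
next
  fix e x assume "(e, x) \<in> pb_carrier p E (p \<circ> K_gamma) (K_cls p E descended (p \<circ> \<gamma>))"
  then show "\<xi> (K_xi (e, x)) = \<xi> (e, \<xi> x)"
    using xi_xi canon_mem by (cases x) (auto simp: mem_K_descended K_gamma_def K_xi_def)
qed

lemma descent_mor_unit:
  assumes E: "closure_space E"
  shows "descent_mor p E C \<gamma> \<xi> (K_cls p E descended (p \<circ> \<gamma>)) K_gamma K_xi (\<lambda>c. (\<gamma> c, canon c))"
  unfolding descent_mor_def
proof (intro conjI allI impI ballI)
  show "cls_mor C (K_cls p E descended (p \<circ> \<gamma>)) (\<lambda>c. (\<gamma> c, canon c))"
    unfolding K_cls_def
    by (rule cls_mor_into_pb[OF closure_space_C E closure_space_descended
          cls_mor_gamma cls_mor_canon]) (simp add: p_gamma_canon)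
next
  fix e c assume "(e, c) \<in> pb_carrier p E (p \<circ> \<gamma>) C"
  then show "(\<gamma> (\<xi> (e, c)), canon (\<xi> (e, c))) = K_xi (e, \<gamma> c, canon c)"
    using gamma_xi canon_xi by (simp add: K_xi_def)
qed (simp add: K_gamma_def)

lemma K_ess_surj_at_if_closed_or_open:
  assumes "closure_space E" "cls_mor E B p" "closed_mor E B p \<or> open_mor E B p"
  shows "K_ess_surj_at p E B C \<gamma> \<xi>"
proof -
  have "(\<gamma> (\<xi> x), canon (\<xi> x)) = x" if "x \<in> carrier (K_cls p E descended (p \<circ> \<gamma>))" for x
    using that gamma_xi canon_xi canon_canon canon_mem
    by (cases x) (auto simp: mem_K_descended)
  moreover have "\<xi> (\<gamma> c, canon c) = c" if "c \<in> carrier C" for c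
    using that xi_canon xi_gamma gamma_mem by simp
  ultimately show ?thesis
    unfolding K_ess_surj_at_def
    using slice_obj_descended[OF assms(2)] descent_mor_xi_descended[OF assms]
      descent_mor_unit[OF assms(1)]
    by blast
qed

end

theorem theorem6p5:
  fixes p :: "'e \<Rightarrow> 'b" and E :: "'e cls" and B :: "'b cls"
  assumes "closure_space E" and "closure_space B"
    and "cls_mor E B p"
    and "p ` carrier E = carrier B"
    and "closed_mor E B p \<or> open_mor E B p"
  shows "(\<forall>(A :: 'a cls) \<alpha> (A' :: 'a' cls) \<alpha>'. slice_obj B A \<alpha> \<longrightarrow> slice_obj B A' \<alpha>' \<longrightarrow>
            K_full_faithful_at p E B A \<alpha> A' \<alpha>') \<and>
         (\<forall>(C :: 'c cls) \<gamma> \<xi>. descent_data p E C \<gamma> \<xi> \<longrightarrow> K_ess_surj_at p E B C \<gamma> \<xi>)"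
proof (intro conjI allI impI)
  fix A :: "'a cls" and \<alpha> and A' :: "'a' cls" and \<alpha>'
  assume A: "slice_obj B A \<alpha>" and "slice_obj B A' \<alpha>'"
  show "K_full_faithful_at p E B A \<alpha> A' \<alpha>'"
    by (rule K_full_faithful_at_if_closed_or_open_surj[OF assms(1,4,5) A])
next
  fix C :: "'c cls" and \<gamma> \<xi>
  assume "descent_data p E C \<gamma> \<xi>"
  then interpret descent_datum p E C \<gamma> \<xi> by unfold_locales
  show "K_ess_surj_at p E B C \<gamma> \<xi>"
    by (rule K_ess_surj_at_if_closed_or_open[OF assms(1,3,5)])
qed

end
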